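(* Let $\mathcal{MP}_{m,n}$ be any message-passing implementation with $m$ clients and $n$ servers, and let $\mathcal{SM}_m$ be the shared-memory implementation constructed from $\mathcal{MP}_{m,n}$ as described in the context, where the objects $\mathrm{SA}[j][r]$ are correct safe agreement objects. Then $\mathcal{SM}_m$ is a refinement of $\mathcal{MP}_{m,n}$, i.e., there exists a forward simulation from $\mathcal{SM}_m$ to $\mathcal{MP}_{m,n}$.
   Context: Objects and executions. An object implementation is a labeled transition system over global states; some transitions are labeled by a call action $\langle M(x)\rangle_k$ (invocation $k$ of method $M$ with argument $x$) or a return action $\langle y\rangle_k$ (invocation $k$ returns $y$); other transitions are internal. Message-passing implementations. A message is a triple $\langle src,dst,v\rangle$ (sender, destination process, payload); $\mathbb{M}sgs$ is the set of messages and $\mathbb{A}$ the set of call and return actions. A message-passing implementation $\mathcal{MP}_{m,n}$ has client processes $0,\dots,m-1$ and server processes $m,\dots,m+n-1$, a set $\mathbb{Q}$ of local states, an initial local state $s_0$ (used by all processes), and transition functions: for a server $j$, a partial function $\delta_j:\mathbb{Q}\times 2^{\mathbb{M}sgs}\rightharpoonup\mathbb{Q}\times 2^{\mathbb{M}sgs}$; for a client $i$, a partial function $\delta_i:\mathbb{Q}\times(2^{\mathbb{M}sgs}\cup\mathbb{A})\rightharpoonup\mathbb{Q}\times 2^{\mathbb{M}sgs}$. A client state records whether an invocation is pending ($\mathit{pending}_i(s)$). A global state $g$ maps each process to a pair (local state, pool of messages it has sent so far); initially each process has $(s_0,\emptyset)$. Transitions: (call) for a client $i$ with $g(i)=(s,P)$,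 $\mathit{pending}_i(s)=\mathit{false}$ and $\delta_i(s,\langle M(x)\rangle)=(s',Msgs)$, move to $g[i\mapsto(s',P\cup Msgs)]$ with label $\langle M(x)\rangle$; (return) for a client $i$ with $g(i)=(s,P)$ and $\delta_i(s,\langle y\rangle)=(s',Msgs)$, move to $g[i\mapsto(s',P\cup Msgs)]$ with label $\langle y\rangle$; (internal) for any process $j$ with $g(j)=(s,P)$ and any set $Msgs$ of messages with destination $j$ contained in the union of all processes' pools, if $\delta_j(s,Msgs)=(s',Msgs')$, move to $g[j\mapsto(s',P\cup Msgs')]$ unlabeled. Forward simulation and refinement. A forward simulation from object $O_1$ to object $O_2$ is a relation $F$ between states of $O_1$ and $O_2$ containing the pair of initial states such that for every transition $(s_1,a,s_1')$ of $O_1$ and every $s_2$ with $(s_1,s_2)\in F$ there is $s_2'$ with either ($s_2'=s_2$ and $a$ is not a call or return action) or ($(s_1',s_2')\in F$, $(s_2,a',s_2')$ is a transition of $O_2$, and $a=a'$ whenever $a$ is a call or return action). $O_1$ refines $O_2$ if such an $F$ exists. Safe agreement. A safe agreement object has methods $propose(v)$ (returns done) and $resolve()$ (returns a value or $\bot$); each process first invokes $propose$ once, then a sequence of $resolve$ invocations. It is correct if: (Agreement) any two $resolve$ invocations returning non-$\bot$ values return the same value; (Validity) a $resolve$ returning $v\neq\bot$ is preceded by a call $propose(v)$; (Liveness) a $resolve$ invoked when no $propose$ is pending returns a non-$\bot$ value; and both methods are wait-free. The construction $\mathcal{SM}_m$. It runs on shared-memory processes $p_0,\dots,p_{m-1}$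 and uses: single-writer registers $\mathrm{client}[i]$ (written only by $p_i$, holding a local state $.state$ and message pool $.msgs$ of client $i$, initially $(s_0,\emptyset)$); single-writer registers $\mathrm{server}[i][j]$ for $0\le i<m$, $m\le j<m+n$ (written only by $p_i$, holding a state, a pool $.msgs$, and a step number $.sn$, initially $(s_0,\emptyset,0)$); and safe agreement objects $\mathrm{SA}[j][r]$ for each server $j$ and $r\ge1$. Each $p_i$ has persistent local variables $\mathrm{resolved}[j]$ (initially true) and $r[j]$ (initially $0$). Define $\mathrm{actStep}(c,a)=(q, c.msgs\cup Msgs')$ where $\delta_i(c.state,a)=(q,Msgs')$. Define $\mathrm{internalStep}(j)$ at $p_i$: compute $Msgs$ as the set of all messages with destination $j$ in $\mathrm{client}[k].msgs$ for all $0\le k<m$, together with, for each server $k$, the messages with destination $j$ in the pool of the entry among $\mathrm{server}[0..m-1][k]$ (read one by one) having maximal step number; if $j<m$, let $(q,Msgs')=\delta_j(\mathrm{client}[j].state,Msgs)$ and return $(q,\mathrm{client}[j].msgs\cup Msgs')$; otherwise let $(q,Msgs')=\delta_j(\mathrm{server}[i][j].state,Msgs)$ and return $(q,\mathrm{server}[i][j].msgs\cup Msgs')$. A method invocation $M(x)$ at $p_i$ executes: $\mathrm{client}[i]\gets\mathrm{actStep}(\mathrm{client}[i],\langle M(x)\rangle)$; then repeat forever: if $\delta_i(\mathrm{client}[i].state,\langle y\rangle)$ is defined for some $y$, set $\mathrm{client}[i]\gets\mathrm{actStep}(\mathrm{client}[i],\langle y\rangle)$ and return $y$; otherwise set $\mathrm{client}[i]\gets\mathrm{internalStep}(i)$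 and then, for $j=m,\dots,m+n-1$: if $\mathrm{resolved}[j]$, then $s\gets\mathrm{internalStep}(j)$, $r[j]\gets r[j]+1$, $\mathrm{resolved}[j]\gets\mathit{false}$, $\mathrm{SA}[j][r[j]].propose(s)$; else $s\gets\mathrm{SA}[j][r[j]].resolve()$ and, if $s\ne\bot$, set $\mathrm{resolved}[j]\gets\mathit{true}$ and $\mathrm{server}[i][j]\gets\langle s,r[j]\rangle$. *)

theory Defs
  imports Main
begin

text \<open>An object is a labelled transition system given by an initial state and a
transition relation; labels are \<open>None\<close> (internal) or \<open>Some a\<close> with a a call or
return action.\<close>

definition forward_simulation ::
  "('s1 \<Rightarrow> 'l option \<Rightarrow> 's1 \<Rightarrow> bool) \<Rightarrow> 's1 \<Rightarrow>
   ('s2 \<Rightarrow> 'l option \<Rightarrow> 's2 \<Rightarrow> bool) \<Rightarrow> 's2 \<Rightarrow>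
   ('s1 \<Rightarrow> 's2 \<Rightarrow> bool) \<Rightarrow> bool" where
  "forward_simulation T1 i1 T2 i2 F \<longleftrightarrow>
     F i1 i2 \<and>
     (\<forall>s1 a s1' s2. T1 s1 a s1' \<and> F s1 s2 \<longrightarrow>
        (\<exists>s2'. F s1' s2' \<and>
           ((s2' = s2 \<and> a = None) \<or>
            (\<exists>a'. T2 s2 a' s2' \<and> (a \<noteq> None \<longrightarrow> a' = a)))))"

definition refines ::
  "('s1 \<Rightarrow> 'l option \<Rightarrow> 's1 \<Rightarrow> bool) \<Rightarrow> 's1 \<Rightarrow>
   ('s2 \<Rightarrow> 'l option \<Rightarrow> 's2 \<Rightarrow> bool) \<Rightarrow> 's2 \<Rightarrow> bool" where
  "refines T1 i1 T2 i2 \<longleftrightarrow> (\<exists>F. forward_simulation T1 i1 T2 i2 F)"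

datatype ('mth, 'arg, 'ret) act = ACall 'mth 'arg | ARet 'ret

text \<open>A message is a triple (src, dst, payload).\<close>
type_synonym 'v msg = "nat \<times> nat \<times> 'v"

definition dst :: "'v msg \<Rightarrow> nat" where "dst msg = fst (snd msg)"

text \<open>Labels of transitions: the client index performing the call/return action
(identifying the invocation, as each client has at most one pending invocation)
and the action.\<close>
type_synonym ('mth, 'arg, 'ret) lab = "(nat \<times> ('mth, 'arg, 'ret) act) option"

text \<open>The transition functions of all
processes are bundled in \<open>delta\<close>; a server only ever receives inputs \<open>Inl Msgs\<close>,
a client receives \<open>Inl Msgs\<close> or \<open>Inr a\<close> with a call/return action a.\<close>
record ('q, 'v, 'mth, 'arg, 'ret) mp_impl =
  nclients :: nat
  nservers :: nat
  s0 :: 'q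
  delta :: "nat \<Rightarrow> 'q \<Rightarrow> ('v msg set + ('mth, 'arg, 'ret) act) \<Rightarrow> ('q \<times> 'v msg set) option"
  pending :: "nat \<Rightarrow> 'q \<Rightarrow> bool"

type_synonym ('q, 'v) mp_gstate = "nat \<Rightarrow> 'q \<times> 'v msg set"

definition mp_init :: "('q, 'v, 'mth, 'arg, 'ret) mp_impl \<Rightarrow> ('q, 'v) mp_gstate" where
  "mp_init P = (\<lambda>_. (s0 P, {}))"

inductive mp_step :: "('q, 'v, 'mth, 'arg, 'ret) mp_impl \<Rightarrow> ('q, 'v) mp_gstate \<Rightarrow>
    ('mth, 'arg, 'ret) lab \<Rightarrow> ('q, 'v) mp_gstate \<Rightarrow> bool" for P where
  mp_call: "\<lbrakk> i < nclients P; g i = (s, Pl); \<not> pending P i s;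
              delta P i s (Inr (ACall M x)) = Some (s', Ms) \<rbrakk>
            \<Longrightarrow> mp_step P g (Some (i, ACall M x)) (g(i := (s', Pl \<union> Ms)))"
| mp_ret: "\<lbrakk> i < nclients P; g i = (s, Pl);
             delta P i s (Inr (ARet y)) = Some (s', Ms) \<rbrakk>
            \<Longrightarrow> mp_step P g (Some (i, ARet y)) (g(i := (s', Pl \<union> Ms)))"
| mp_internal: "\<lbrakk> j < nclients P + nservers P; g j = (s, Pl);
                  Ms \<subseteq> (\<Union>k < nclients P + nservers P. snd (g k));
                  \<forall>msg \<in> Ms. dst msg = j;
                  delta P j s (Inl Ms) = Some (s', Ms') \<rbrakk>
            \<Longrightarrow> mp_step P g None (g(j := (s', Pl \<union> Ms')))"

definition pending_wf :: "('q, 'v, 'mth, 'arg, 'ret) mp_impl \<Rightarrow> bool" where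
  "pending_wf P \<longleftrightarrow>
     (\<forall>i < nclients P. \<not> pending P i (s0 P)) \<and>
     (\<forall>i < nclients P. \<forall>s y q Ms. delta P i s (Inr (ARet y)) = Some (q, Ms) \<longrightarrow> \<not> pending P i q)"

section \<open>Safe agreement objects (most permissive correct behaviour)\<close>

text \<open>State of one safe agreement object: the values whose propose was invoked,
the processes with a pending propose, the value returned by some resolve so far,
and the processes whose pending resolve was invoked while no propose was pending.\<close>
record 'w sa_state =
  proposed :: "'w set"
  pendP :: "nat set"
  decided :: "'w option"
  liveR :: "nat set"

definition sa_init :: "'w sa_state" where
  "sa_init = \<lparr>proposed = {}, pendP = {}, decided = None, liveR = {}\<rparr>"

text \<open>Program counter of a process p_i (each constructor is the point before one
atomic step).  \<open>RdCl t k acc\<close>: internalStep(t) is about to read client[k], having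
collected the messages \<open>acc\<close>; \<open>RdSv t k i' best acc\<close>: about to read server[i'][k]
where \<open>best\<close> is the (step number, pool) of the entry with maximal step number read so
far for server k; \<open>Compute t acc\<close>: all reads done; \<open>PropRet j\<close>: propose on
SA[j][r[j]] pending; \<open>SvLoop j\<close>: at iteration j of the for loop; \<open>ResRet j\<close>:
resolve pending; \<open>WrSv j s\<close>: about to write server[i][j].\<close>
datatype ('q, 'v) pc =
    Idle
  | Top
  | RdCl nat nat "'v msg set"
  | RdSv nat nat nat "(nat \<times> 'v msg set) option" "'v msg set"
  | Compute nat "'v msg set"
  | PropRet nat
  | SvLoop nat
  | ResRet nat
  | WrSv nat "'q \<times> 'v msg set"

record ('q, 'v) lstate =
  pc :: "('q, 'v) pc"
  resolved :: "nat \<Rightarrow> bool"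
  rnd :: "nat \<Rightarrow> nat"

record ('q, 'v) sm_gstate =
  cl :: "nat \<Rightarrow> 'q \<times> 'v msg set"
  sv :: "nat \<Rightarrow> nat \<Rightarrow> 'q \<times> 'v msg set \<times> nat"
  sa :: "nat \<Rightarrow> nat \<Rightarrow> ('q \<times> 'v msg set) sa_state"
  loc :: "nat \<Rightarrow> ('q, 'v) lstate"

definition sm_init :: "('q, 'v, 'mth, 'arg, 'ret) mp_impl \<Rightarrow> ('q, 'v) sm_gstate" where
  "sm_init P = \<lparr> cl = (\<lambda>_. (s0 P, {})), sv = (\<lambda>_ _. (s0 P, {}, 0)),
                 sa = (\<lambda>_ _. sa_init),
                 loc = (\<lambda>_. \<lparr>pc = Idle, resolved = (\<lambda>_. True), rnd = (\<lambda>_. 0)\<rparr>) \<rparr>"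

definition set_pc :: "nat \<Rightarrow> ('q, 'v) pc \<Rightarrow> ('q, 'v) sm_gstate \<Rightarrow> ('q, 'v) sm_gstate" where
  "set_pc i p G = G\<lparr>loc := (loc G)(i := (loc G i)\<lparr>pc := p\<rparr>)\<rparr>"

definition upd_sa :: "nat \<Rightarrow> nat \<Rightarrow> (('q \<times> 'v msg set) sa_state \<Rightarrow> ('q \<times> 'v msg set) sa_state)
    \<Rightarrow> ('q, 'v) sm_gstate \<Rightarrow> ('q, 'v) sm_gstate" where
  "upd_sa j r f G = G\<lparr>sa := (sa G)(j := (sa G j)(r := f (sa G j r)))\<rparr>"

definition upd_best :: "(nat \<times> 'v msg set) option \<Rightarrow> 'q \<times> 'v msg set \<times> nat
    \<Rightarrow> (nat \<times> 'v msg set) option" where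
  "upd_best best e = (case best of
      None \<Rightarrow> Some (snd (snd e), fst (snd e))
    | Some (b, _) \<Rightarrow> if snd (snd e) > b then Some (snd (snd e), fst (snd e)) else best)"

text \<open>One atomic step of process p_i (each step accesses at most one shared object).\<close>
inductive sm_pstep :: "('q, 'v, 'mth, 'arg, 'ret) mp_impl \<Rightarrow> nat \<Rightarrow> ('q, 'v) sm_gstate \<Rightarrow>
    ('mth, 'arg, 'ret) lab \<Rightarrow> ('q, 'v) sm_gstate \<Rightarrow> bool" for P i where
  \<comment> \<open>invocation M(x): client[i] <- actStep(client[i], <M(x)>)\<close>
  sm_call: "\<lbrakk> pc (loc G i) = Idle; cl G i = (c, Pl);
              delta P i c (Inr (ACall M x)) = Some (q, Ms) \<rbrakk>
     \<Longrightarrow> sm_pstep P i G (Some (i, ACall M x))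
           (set_pc i Top (G\<lparr>cl := (cl G)(i := (q, Pl \<union> Ms))\<rparr>))"
  \<comment> \<open>return: client[i] <- actStep(client[i], <y>); return y\<close>
| sm_ret: "\<lbrakk> pc (loc G i) = Top; cl G i = (c, Pl);
             delta P i c (Inr (ARet y)) = Some (q, Ms) \<rbrakk>
     \<Longrightarrow> sm_pstep P i G (Some (i, ARet y))
           (set_pc i Idle (G\<lparr>cl := (cl G)(i := (q, Pl \<union> Ms))\<rparr>))"
  \<comment> \<open>no return possible: start client[i] <- internalStep(i)\<close>
| sm_noret: "\<lbrakk> pc (loc G i) = Top; \<forall>y. delta P i (fst (cl G i)) (Inr (ARet y)) = None \<rbrakk>
     \<Longrightarrow> sm_pstep P i G None (set_pc i (RdCl i 0 {}) G)"
| sm_rdcl: "\<lbrakk> pc (loc G i) = RdCl t k acc; k < nclients P \<rbrakk>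
     \<Longrightarrow> sm_pstep P i G None
           (set_pc i (RdCl t (Suc k) (acc \<union> {msg \<in> snd (cl G k). dst msg = t})) G)"
| sm_rdcl_end: "\<lbrakk> pc (loc G i) = RdCl t k acc; \<not> k < nclients P \<rbrakk>
     \<Longrightarrow> sm_pstep P i G None (set_pc i (RdSv t (nclients P) 0 None acc) G)"
| sm_rdsv: "\<lbrakk> pc (loc G i) = RdSv t k i' best acc; k < nclients P + nservers P;
              i' < nclients P \<rbrakk>
     \<Longrightarrow> sm_pstep P i G None
           (set_pc i (RdSv t k (Suc i') (upd_best best (sv G i' k)) acc) G)"
| sm_rdsv_next: "\<lbrakk> pc (loc G i) = RdSv t k i' best acc; k < nclients P + nservers P;
                   \<not> i' < nclients P \<rbrakk>
     \<Longrightarrow> sm_pstep P i G None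
           (set_pc i (RdSv t (Suc k) 0 None
              (acc \<union> {msg \<in> (case best of None \<Rightarrow> {} | Some (_, Pl) \<Rightarrow> Pl). dst msg = t})) G)"
| sm_rdsv_end: "\<lbrakk> pc (loc G i) = RdSv t k i' best acc; \<not> k < nclients P + nservers P \<rbrakk>
     \<Longrightarrow> sm_pstep P i G None (set_pc i (Compute t acc) G)"
  \<comment> \<open>client target (t = i): write client[i] <- internalStep(i), then start the for loop\<close>
| sm_comp_client: "\<lbrakk> pc (loc G i) = Compute t acc; t < nclients P; cl G t = (c, Pl);
                     delta P t c (Inl acc) = Some (q, Ms') \<rbrakk>
     \<Longrightarrow> sm_pstep P i G None
           (set_pc i (SvLoop (nclients P)) (G\<lparr>cl := (cl G)(t := (q, Pl \<union> Ms'))\<rparr>))"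
  \<comment> \<open>server target j: s <- internalStep(j); r[j]++; resolved[j] <- false;
      invoke SA[j][r[j]].propose(s)\<close>
| sm_comp_server: "\<lbrakk> pc (loc G i) = Compute j acc; \<not> j < nclients P;
                     sv G i j = (c, Pl, sn);
                     delta P j c (Inl acc) = Some (q, Ms');
                     r' = Suc (rnd (loc G i) j) \<rbrakk>
     \<Longrightarrow> sm_pstep P i G None
           (upd_sa j r' (\<lambda>A. A\<lparr>proposed := insert (q, Pl \<union> Ms') (proposed A),
                                pendP := insert i (pendP A)\<rparr>)
             (G\<lparr>loc := (loc G)(i := (loc G i)\<lparr>pc := PropRet j,
                   resolved := (resolved (loc G i))(j := False),
                   rnd := (rnd (loc G i))(j := r')\<rparr>)\<rparr>))"
| sm_propret: "\<lbrakk> pc (loc G i) = PropRet j \<rbrakk>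
     \<Longrightarrow> sm_pstep P i G None
           (set_pc i (SvLoop (Suc j))
              (upd_sa j (rnd (loc G i) j) (\<lambda>A. A\<lparr>pendP := pendP A - {i}\<rparr>) G))"
| sm_loop_end: "\<lbrakk> pc (loc G i) = SvLoop j; \<not> j < nclients P + nservers P \<rbrakk>
     \<Longrightarrow> sm_pstep P i G None (set_pc i Top G)"
| sm_loop_prop: "\<lbrakk> pc (loc G i) = SvLoop j; j < nclients P + nservers P;
                   resolved (loc G i) j \<rbrakk>
     \<Longrightarrow> sm_pstep P i G None (set_pc i (RdCl j 0 {}) G)"
  \<comment> \<open>invoke SA[j][r[j]].resolve()\<close>
| sm_loop_res: "\<lbrakk> pc (loc G i) = SvLoop j; j < nclients P + nservers P;
                  \<not> resolved (loc G i) j \<rbrakk>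
     \<Longrightarrow> sm_pstep P i G None
           (set_pc i (ResRet j)
              (upd_sa j (rnd (loc G i) j)
                 (\<lambda>A. A\<lparr>liveR := (if pendP A = {} then insert i (liveR A) else liveR A - {i})\<rparr>) G))"
  \<comment> \<open>resolve returns bottom (only allowed if some propose was pending at its invocation)\<close>
| sm_res_bot: "\<lbrakk> pc (loc G i) = ResRet j; i \<notin> liveR (sa G j (rnd (loc G i) j)) \<rbrakk>
     \<Longrightarrow> sm_pstep P i G None (set_pc i (SvLoop (Suc j)) G)"
  \<comment> \<open>resolve returns a value v: validity and agreement\<close>
| sm_res_val: "\<lbrakk> pc (loc G i) = ResRet j; A = sa G j (rnd (loc G i) j);
                 v \<in> proposed A; decided A = None \<or> decided A = Some v \<rbrakk>
     \<Longrightarrow> sm_pstep P i G None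
           (upd_sa j (rnd (loc G i) j) (\<lambda>A. A\<lparr>decided := Some v, liveR := liveR A - {i}\<rparr>)
             (G\<lparr>loc := (loc G)(i := (loc G i)\<lparr>pc := WrSv j v,
                   resolved := (resolved (loc G i))(j := True)\<rparr>)\<rparr>))"
  \<comment> \<open>server[i][j] <- (s, r[j])\<close>
| sm_wrsv: "\<lbrakk> pc (loc G i) = WrSv j v \<rbrakk>
     \<Longrightarrow> sm_pstep P i G None
           (set_pc i (SvLoop (Suc j))
              (G\<lparr>sv := (sv G)(i := (sv G i)(j := (fst v, snd v, rnd (loc G i) j)))\<rparr>))"

definition sm_step :: "('q, 'v, 'mth, 'arg, 'ret) mp_impl \<Rightarrow> ('q, 'v) sm_gstate \<Rightarrow>
    ('mth, 'arg, 'ret) lab \<Rightarrow> ('q, 'v) sm_gstate \<Rightarrow> bool" where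
  "sm_step P G l G' \<longleftrightarrow> (\<exists>i < nclients P. sm_pstep P i G l G')"

end

theory Submission
  imports Defs
begin

(*
  A shared-memory state is mapped to the message-passing state in which client i is in the
  state stored in client[i], and server j is in the state decided by SA[j][R] for the last
  round R of j that has a decision (round 0 standing for the initial state).
  A process proposes to SA[j][r+1] only a state obtained by one step of server j from the
  decision of round r, which it reads from its own register server[i][j], on messages that
  have already been sent.  Hence the decided rounds of a server form a prefix of the rounds
  along which the message pools grow, so every message read by the construction is in the
  abstract global pool; the first decision of a round is then an internal step of server j,
  an update of client[i] is a step of client i, and every other step stutters.
*)

lemma refines_by_invariant:
  assumes "I i1" and "F i1 i2"
    and "\<And>s1 a s1'. I s1 \<Longrightarrow> T1 s1 a s1' \<Longrightarrow> I s1'"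
    and "\<And>s1 a s1' s2. I s1 \<Longrightarrow> F s1 s2 \<Longrightarrow> T1 s1 a s1' \<Longrightarrow>
           \<exists>s2'. F s1' s2' \<and>
             (s2' = s2 \<and> a = None \<or> (\<exists>a'. T2 s2 a' s2' \<and> (a \<noteq> None \<longrightarrow> a' = a)))"
  shows "refines T1 i1 T2 i2"
  unfolding refines_def forward_simulation_def
proof (intro exI[of _ "\<lambda>s1 s2. I s1 \<and> F s1 s2"] conjI allI impI)
  fix s1 a s1' s2
  assume "T1 s1 a s1' \<and> I s1 \<and> F s1 s2"
  then show "\<exists>s2'. (I s1' \<and> F s1' s2') \<and>
      (s2' = s2 \<and> a = None \<or> (\<exists>a'. T2 s2 a' s2' \<and> (a \<noteq> None \<longrightarrow> a' = a)))"
    using assms(3,4) by meson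
qed (use assms(1,2) in blast)+

lemma downward_closed_chain:
  fixes f :: "nat \<Rightarrow> 'a option"
  assumes step: "\<And>r w. f (Suc r) = Some w \<Longrightarrow> \<exists>u. f r = Some u \<and> R u w"
    and "reflp R" and "transp R"
    and "r \<le> r'" and "f r' = Some w"
  shows "\<exists>u. f r = Some u \<and> R u w"
  using \<open>r \<le> r'\<close>
proof (induction rule: inc_induct)
  case base
  show ?case using \<open>f r' = Some w\<close> \<open>reflp R\<close> by (simp add: reflpD)
next
  case (step n)
  then obtain u' where "f (Suc n) = Some u'" "R u' w" by blast
  with assms(1) obtain u where "f n = Some u" "R u u'" by blast
  with \<open>R u' w\<close> \<open>transp R\<close> show ?case by (meson transpD)
qed

lemma last_defined_unique:
  fixes f :: "nat \<Rightarrow> 'a option"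
  assumes step: "\<And>r w. f (Suc r) = Some w \<Longrightarrow> f r \<noteq> None"
    and "f r \<noteq> None" "f (Suc r) = None" "f r' \<noteq> None" "f (Suc r') = None"
  shows "r = r'"
proof -
  have defined: "f n \<noteq> None" if "n \<le> m" "f m \<noteq> None" for n m
    using downward_closed_chain[of f "\<lambda>_ _. True" n m] step that
    by (auto simp: reflp_def transp_def)
  show ?thesis
  proof (rule ccontr)
    assume "r \<noteq> r'"
    then have "Suc r \<le> r' \<or> Suc r' \<le> r" by linarith
    then show False using defined assms(2-5) by blast
  qed
qed

lemma map_le_SomeD: "m \<subseteq>\<^sub>m m' \<Longrightarrow> m a = Some b \<Longrightarrow> m' a = Some b"
  by (metis domI map_le_def)

lemma map_le_ran: "m \<subseteq>\<^sub>m m' \<Longrightarrow> ran m \<subseteq> ran m'"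
  by (force simp: map_le_def ran_def dom_def)

lemma set_pc_simps [simp]:
  "cl (set_pc i p G) = cl G" "sv (set_pc i p G) = sv G" "sa (set_pc i p G) = sa G"
  "loc (set_pc i p G) = (loc G)(i := (loc G i)\<lparr>pc := p\<rparr>)"
  by (simp_all add: set_pc_def)

lemma upd_sa_simps [simp]:
  "cl (upd_sa j r f G) = cl G" "sv (upd_sa j r f G) = sv G" "loc (upd_sa j r f G) = loc G"
  "sa (upd_sa j r f G) = (sa G)(j := (sa G j)(r := f (sa G j r)))"
  by (simp_all add: upd_sa_def)

section \<open>Decisions of the safe agreement objects\<close>

definition agreed :: "('q, 'v, 'mth, 'arg, 'ret) mp_impl \<Rightarrow> ('q, 'v) sm_gstate \<Rightarrow>
    nat \<Rightarrow> nat \<Rightarrow> ('q \<times> 'v msg set) option" where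
  "agreed P G j r = (if r = 0 then Some (s0 P, {}) else decided (sa G j r))"

definition sent_msgs :: "('q, 'v, 'mth, 'arg, 'ret) mp_impl \<Rightarrow> ('q, 'v) sm_gstate \<Rightarrow> 'v msg set" where
  "sent_msgs P G = (\<Union>k<nclients P. snd (cl G k)) \<union>
     (\<Union>j\<in>{nclients P..<nclients P + nservers P}. \<Union>(snd ` ran (agreed P G j)))"

lemma agreed_update_simps [simp]:
  "agreed P (set_pc i p G) = agreed P G" "agreed P (G\<lparr>cl := C\<rparr>) = agreed P G"
  "agreed P (G\<lparr>sv := S\<rparr>) = agreed P G" "agreed P (G\<lparr>loc := L\<rparr>) = agreed P G"
  by (simp_all add: agreed_def fun_eq_iff)

lemma agreed_upd_sa [simp]:
  "(\<And>A. decided (f A) = decided A) \<Longrightarrow> agreed P (upd_sa j r f G) = agreed P G"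
  by (simp add: agreed_def fun_eq_iff)

lemma sent_msgs_set_pc [simp]: "sent_msgs P (set_pc i p G) = sent_msgs P G"
  unfolding sent_msgs_def by simp

definition sent_to :: "('q, 'v, 'mth, 'arg, 'ret) mp_impl \<Rightarrow> ('q, 'v) sm_gstate \<Rightarrow>
    nat \<Rightarrow> 'v msg set \<Rightarrow> bool" where
  "sent_to P G t Ms \<longleftrightarrow> Ms \<subseteq> sent_msgs P G \<and> (\<forall>msg\<in>Ms. dst msg = t)"

lemma sent_to_mono: "sent_to P G t Ms \<Longrightarrow> sent_msgs P G \<subseteq> sent_msgs P G' \<Longrightarrow> sent_to P G' t Ms"
  unfolding sent_to_def by blast

definition valid_proposal :: "('q, 'v, 'mth, 'arg, 'ret) mp_impl \<Rightarrow> ('q, 'v) sm_gstate \<Rightarrow>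
    nat \<Rightarrow> nat \<Rightarrow> 'q \<times> 'v msg set \<Rightarrow> bool" where
  "valid_proposal P G j r v \<longleftrightarrow> nclients P \<le> j \<and> j < nclients P + nservers P \<and>
     (\<exists>c Pl Ms q Ms'. agreed P G j r = Some (c, Pl) \<and> delta P j c (Inl Ms) = Some (q, Ms') \<and>
        v = (q, Pl \<union> Ms') \<and> sent_to P G j Ms)"

definition agreement_inv :: "('q, 'v, 'mth, 'arg, 'ret) mp_impl \<Rightarrow> ('q, 'v) sm_gstate \<Rightarrow> bool" where
  "agreement_inv P G \<longleftrightarrow>
     (\<forall>j. proposed (sa G j 0) = {}) \<and>
     (\<forall>j r v. decided (sa G j r) = Some v \<longrightarrow> v \<in> proposed (sa G j r)) \<and>
     (\<forall>j r v. v \<in> proposed (sa G j (Suc r)) \<longrightarrow> valid_proposal P G j r v)"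

lemma agreed_Suc:
  assumes "agreement_inv P G" and "agreed P G j (Suc r) = Some v"
  shows "\<exists>u. agreed P G j r = Some u \<and> snd u \<subseteq> snd v"
proof -
  have "decided (sa G j (Suc r)) = Some v"
    using assms(2) unfolding agreed_def by simp
  then have "v \<in> proposed (sa G j (Suc r))"
    using assms(1) unfolding agreement_inv_def by blast
  then have "valid_proposal P G j r v"
    using assms(1) unfolding agreement_inv_def by blast
  then show ?thesis unfolding valid_proposal_def by auto
qed

lemma agreed_downward:
  assumes "agreement_inv P G" and "r \<le> r'" and "agreed P G j r' = Some w"
  shows "\<exists>u. agreed P G j r = Some u \<and> snd u \<subseteq> snd w"
proof (rule downward_closed_chain[where R = "\<lambda>u w. snd u \<subseteq> snd w"])
  show "\<exists>u. agreed P G j r = Some u \<and> snd u \<subseteq> snd w" if "agreed P G j (Suc r) = Some w" for r w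
    using assms(1) that by (rule agreed_Suc)
qed (use assms(2,3) in \<open>auto simp: reflp_def transp_def\<close>)

lemma agreed_last_unique:
  assumes "agreement_inv P G"
    and "agreed P G j r \<noteq> None" "agreed P G j (Suc r) = None"
    and "agreed P G j r' \<noteq> None" "agreed P G j (Suc r') = None"
  shows "r = r'"
  using last_defined_unique[of "agreed P G j"] agreed_Suc[OF assms(1)] assms(2-) by blast

lemma sm_pstep_agreed_mono:
  assumes "sm_pstep P i G l G'"
  shows "agreed P G j \<subseteq>\<^sub>m agreed P G' j"
  using assms
proof cases
  case (sm_res_val j' A v)
  then show ?thesis by (auto simp: map_le_def agreed_def)
qed (simp_all add: map_le_def agreed_def)

lemma sm_pstep_client_pool_mono:
  assumes "sm_pstep P i G l G'"
  shows "snd (cl G k) \<subseteq> snd (cl G' k)"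
  using assms by cases auto

lemma sent_msgs_mono:
  assumes "\<And>j. agreed P G j \<subseteq>\<^sub>m agreed P G' j" and "\<And>k. snd (cl G k) \<subseteq> snd (cl G' k)"
  shows "sent_msgs P G \<subseteq> sent_msgs P G'"
  unfolding sent_msgs_def
  using assms by (intro Un_mono UN_mono Union_mono image_mono map_le_ran order_refl)

lemma sm_pstep_sent_msgs_mono:
  assumes "sm_pstep P i G l G'"
  shows "sent_msgs P G \<subseteq> sent_msgs P G'"
  using sent_msgs_mono sm_pstep_agreed_mono[OF assms] sm_pstep_client_pool_mono[OF assms] by blast

lemma valid_proposal_mono:
  assumes "valid_proposal P G j r v"
    and "\<And>j. agreed P G j \<subseteq>\<^sub>m agreed P G' j" and "sent_msgs P G \<subseteq> sent_msgs P G'"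
  shows "valid_proposal P G' j r v"
  using assms unfolding valid_proposal_def by (blast intro: map_le_SomeD sent_to_mono)

definition registers_agreed ::
    "('q, 'v, 'mth, 'arg, 'ret) mp_impl \<Rightarrow> ('q, 'v) sm_gstate \<Rightarrow> bool" where
  "registers_agreed P G \<longleftrightarrow>
     (\<forall>i j. agreed P G j (snd (snd (sv G i j))) = Some (fst (sv G i j), fst (snd (sv G i j))))"

definition target_ok ::
    "('q, 'v, 'mth, 'arg, 'ret) mp_impl \<Rightarrow> ('q, 'v) lstate \<Rightarrow> nat \<Rightarrow> nat \<Rightarrow> bool" where
  "target_ok P L i t \<longleftrightarrow> t = i \<or> (nclients P \<le> t \<and> t < nclients P + nservers P \<and> resolved L t)"

lemma target_ok_pc_update [simp]: "target_ok P (L\<lparr>pc := p\<rparr>) i t = target_ok P L i t"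
  by (simp add: target_ok_def)

definition local_inv :: "('q, 'v, 'mth, 'arg, 'ret) mp_impl \<Rightarrow> ('q, 'v) sm_gstate \<Rightarrow> nat \<Rightarrow> bool" where
  "local_inv P G i \<longleftrightarrow> (case pc (loc G i) of
     Idle \<Rightarrow> \<not> pending P i (fst (cl G i))
   | Top \<Rightarrow> True
   | RdCl t k Ms \<Rightarrow> target_ok P (loc G i) i t \<and> sent_to P G t Ms
   | RdSv t k i' best Ms \<Rightarrow> target_ok P (loc G i) i t \<and> sent_to P G t Ms \<and> nclients P \<le> k \<and>
        (\<forall>b Pl. best = Some (b, Pl) \<longrightarrow> Pl \<subseteq> sent_msgs P G)
   | Compute t Ms \<Rightarrow> target_ok P (loc G i) i t \<and> sent_to P G t Ms
   | PropRet j \<Rightarrow> nclients P \<le> j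
   | SvLoop j \<Rightarrow> nclients P \<le> j
   | ResRet j \<Rightarrow> nclients P \<le> j
   | WrSv j v \<Rightarrow> nclients P \<le> j \<and> resolved (loc G i) j \<and> agreed P G j (rnd (loc G i) j) = Some v)"

(* Between resolving SA[j][r[j]] and writing server[i][j], the register still holds the
   decision of the previous round. *)
definition registers_current ::
    "('q, 'v, 'mth, 'arg, 'ret) mp_impl \<Rightarrow> ('q, 'v) sm_gstate \<Rightarrow> nat \<Rightarrow> bool" where
  "registers_current P G i \<longleftrightarrow>
     (\<forall>j. resolved (loc G i) j \<and> (\<forall>v. pc (loc G i) \<noteq> WrSv j v) \<longrightarrow>
        agreed P G j (rnd (loc G i) j) = Some (fst (sv G i j), fst (snd (sv G i j))))"

definition sm_inv :: "('q, 'v, 'mth, 'arg, 'ret) mp_impl \<Rightarrow> ('q, 'v) sm_gstate \<Rightarrow> bool" where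
  "sm_inv P G \<longleftrightarrow> agreement_inv P G \<and> registers_agreed P G \<and>
     (\<forall>i<nclients P. local_inv P G i \<and> registers_current P G i)"

lemma client_pool_sent: "k < nclients P \<Longrightarrow> snd (cl G k) \<subseteq> sent_msgs P G"
  unfolding sent_msgs_def by blast

lemma agreed_pool_sent:
  "nclients P \<le> j \<Longrightarrow> j < nclients P + nservers P \<Longrightarrow> agreed P G j r = Some v \<Longrightarrow> snd v \<subseteq> sent_msgs P G"
  unfolding sent_msgs_def by (force intro: ranI)

lemma register_pool_sent:
  "registers_agreed P G \<Longrightarrow> nclients P \<le> j \<Longrightarrow> j < nclients P + nservers P \<Longrightarrow>
    fst (snd (sv G i j)) \<subseteq> sent_msgs P G"
  unfolding registers_agreed_def using agreed_pool_sent by fastforce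

lemma upd_best_cases: "upd_best best e = Some (b, Pl) \<Longrightarrow> best = Some (b, Pl) \<or> Pl = fst (snd e)"
  unfolding upd_best_def by (auto split: option.splits if_splits)

lemma agreement_inv_frame:
  assumes "agreement_inv P G"
    and "\<And>j r. proposed (sa G' j r) = proposed (sa G j r)"
    and "\<And>j r. decided (sa G' j r) = decided (sa G j r)"
    and "\<And>j r v. valid_proposal P G j r v \<Longrightarrow> valid_proposal P G' j r v"
  shows "agreement_inv P G'"
  using assms unfolding agreement_inv_def by simp

lemma agreement_inv_step:
  assumes "sm_inv P G" and "i < nclients P" and step: "sm_pstep P i G l G'"
  shows "agreement_inv P G'"
proof -
  have aI: "agreement_inv P G" and li: "local_inv P G i" and rc: "registers_current P G i"
    using assms(1,2) unfolding sm_inv_def by auto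
  have valid_mono: "valid_proposal P G' j r v" if "valid_proposal P G j r v" for j r v
    using that sm_pstep_agreed_mono[OF step] sm_pstep_sent_msgs_mono[OF step]
    by (rule valid_proposal_mono)
  from step show ?thesis
  proof cases
    case (sm_comp_server j Ms c Pl sn q Ms' r')
    have "target_ok P (loc G i) i j" and "sent_to P G j Ms"
      using li sm_comp_server by (simp_all add: local_inv_def)
    with assms(2) \<open>\<not> j < nclients P\<close> have server: "nclients P \<le> j" "j < nclients P + nservers P"
      and "resolved (loc G i) j"
      by (auto simp: target_ok_def)
    then have "agreed P G j (rnd (loc G i) j) = Some (c, Pl)"
      using rc sm_comp_server by (simp add: registers_current_def)
    then have "valid_proposal P G j (rnd (loc G i) j) (q, Pl \<union> Ms')"
      using server \<open>sent_to P G j Ms\<close> sm_comp_server unfolding valid_proposal_def by blast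
    then show ?thesis
      using aI valid_mono sm_comp_server unfolding agreement_inv_def by (auto split: if_splits)
  next
    case (sm_res_val j A v)
    then show ?thesis
      using aI valid_mono unfolding agreement_inv_def by auto
  qed (rule agreement_inv_frame[OF aI _ _ valid_mono]; simp)+
qed

lemma registers_agreed_step:
  assumes "sm_inv P G" and "i < nclients P" and step: "sm_pstep P i G l G'"
  shows "registers_agreed P G'"
proof -
  have li: "local_inv P G i" and rA: "registers_agreed P G"
    using assms(1,2) unfolding sm_inv_def by auto
  have AM: "\<And>j. agreed P G j \<subseteq>\<^sub>m agreed P G' j"
    using step by (rule sm_pstep_agreed_mono)
  from step show ?thesis
  proof cases
    case (sm_wrsv j v)
    then show ?thesis using li rA by (auto simp: local_inv_def registers_agreed_def)
  qed (use rA AM in \<open>auto simp: registers_agreed_def intro: map_le_SomeD\<close>)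
qed

lemma local_inv_step:
  assumes "pending_wf P" and "sm_inv P G" and "i < nclients P" and step: "sm_pstep P i G l G'"
  shows "local_inv P G' i"
proof -
  have aI: "agreement_inv P G" and li: "local_inv P G i" and rA: "registers_agreed P G"
    using assms(2,3) unfolding sm_inv_def by auto
  have SM: "sent_msgs P G \<subseteq> sent_msgs P G'"
    using step by (rule sm_pstep_sent_msgs_mono)
  from step show ?thesis
  proof cases
    case (sm_ret c Pl y q Ms)
    have "\<not> pending P i q"
      using assms(1,3) sm_ret unfolding pending_wf_def by blast
    then show ?thesis by (simp add: sm_ret local_inv_def)
  next
    case (sm_rdcl t k Ms)
    have "snd (cl G k) \<subseteq> sent_msgs P G"
      using sm_rdcl(4) by (rule client_pool_sent)
    then show ?thesis using li sm_rdcl by (auto simp: local_inv_def target_ok_def sent_to_def)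
  next
    case (sm_rdsv t k i' best Ms)
    have "nclients P \<le> k"
      using li sm_rdsv by (simp add: local_inv_def)
    with rA have "fst (snd (sv G i' k)) \<subseteq> sent_msgs P G"
      using \<open>k < nclients P + nservers P\<close> by (rule register_pool_sent)
    moreover have "\<forall>b Pl. best = Some (b, Pl) \<longrightarrow> Pl \<subseteq> sent_msgs P G"
      using li sm_rdsv by (simp add: local_inv_def)
    ultimately have "\<forall>b Pl. upd_best best (sv G i' k) = Some (b, Pl) \<longrightarrow> Pl \<subseteq> sent_msgs P G"
      by (blast dest: upd_best_cases)
    then show ?thesis
      using li sm_rdsv by (simp add: local_inv_def target_ok_def sent_to_def)
  next
    case (sm_rdsv_next t k i' best Ms)
    then show ?thesis using li by (auto simp: local_inv_def sent_to_def split: option.splits)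
  next
    case (sm_res_val j A v)
    have "rnd (loc G i) j \<noteq> 0"
      using aI sm_res_val unfolding agreement_inv_def by (metis empty_iff)
    then have "agreed P G' j (rnd (loc G i) j) = Some v"
      by (simp add: sm_res_val agreed_def)
    then show ?thesis using li sm_res_val by (simp add: local_inv_def)
  qed (use li SM in \<open>auto simp: local_inv_def target_ok_def sent_to_def\<close>)
qed

lemma registers_current_step:
  assumes "sm_inv P G" and "i < nclients P" and step: "sm_pstep P i G l G'"
  shows "registers_current P G' i"
proof -
  have li: "local_inv P G i" and rc: "registers_current P G i"
    using assms(1,2) unfolding sm_inv_def by auto
  have AM: "\<And>j. agreed P G j \<subseteq>\<^sub>m agreed P G' j"
    using step by (rule sm_pstep_agreed_mono)
  from step show ?thesis
  proof cases
    case (sm_wrsv j v)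
    then show ?thesis using li rc by (auto simp: local_inv_def registers_current_def)
  qed (use rc AM in \<open>auto simp: registers_current_def intro: map_le_SomeD\<close>)
qed

lemma sm_pstep_other_unchanged:
  assumes "local_inv P G i" and "sm_pstep P i G l G'" and "j \<noteq> i"
  shows "loc G' j = loc G j \<and> cl G' j = cl G j \<and> sv G' j = sv G j"
  using assms(2)
proof cases
  case (sm_comp_client t Ms c Pl q Ms')
  then have "t = i"
    using assms(1) by (auto simp: local_inv_def target_ok_def)
  then show ?thesis using sm_comp_client assms(3) by simp
qed (use assms(3) in simp_all)

lemma local_inv_frame:
  assumes "local_inv P G j" and "\<And>k. agreed P G k \<subseteq>\<^sub>m agreed P G' k"
    and "sent_msgs P G \<subseteq> sent_msgs P G'" and "loc G' j = loc G j" and "cl G' j = cl G j"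
  shows "local_inv P G' j"
  using assms
  by (fastforce simp: local_inv_def target_ok_def sent_to_def intro: map_le_SomeD split: pc.splits)

lemma registers_current_frame:
  assumes "registers_current P G j" and "\<And>k. agreed P G k \<subseteq>\<^sub>m agreed P G' k"
    and "loc G' j = loc G j" and "sv G' j = sv G j"
  shows "registers_current P G' j"
  using assms unfolding registers_current_def by (auto intro: map_le_SomeD)

lemma sm_inv_step:
  assumes "pending_wf P" and "sm_inv P G" and "sm_step P G l G'"
  shows "sm_inv P G'"
proof -
  obtain i where i: "i < nclients P" and step: "sm_pstep P i G l G'"
    using assms(3) unfolding sm_step_def by blast
  have other: "local_inv P G' j \<and> registers_current P G' j" if "j < nclients P" "j \<noteq> i" for j
  proof -
    have "local_inv P G j" "registers_current P G j" "local_inv P G i"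
      using assms(2) i that(1) unfolding sm_inv_def by auto
    then show ?thesis
      using sm_pstep_other_unchanged[OF _ step that(2)] sm_pstep_agreed_mono[OF step]
        sm_pstep_sent_msgs_mono[OF step] local_inv_frame registers_current_frame
      by metis
  qed
  show ?thesis
    unfolding sm_inv_def
    using agreement_inv_step[OF assms(2) i step] registers_agreed_step[OF assms(2) i step]
      local_inv_step[OF assms(1,2) i step] registers_current_step[OF assms(2) i step] other
    by blast
qed

lemma sm_inv_init: "pending_wf P \<Longrightarrow> sm_inv P (sm_init P)"
  unfolding sm_inv_def agreement_inv_def registers_agreed_def local_inv_def registers_current_def
    pending_wf_def
  by (simp add: sm_init_def sa_init_def agreed_def)

definition sm_abs ::
    "('q, 'v, 'mth, 'arg, 'ret) mp_impl \<Rightarrow> ('q, 'v) sm_gstate \<Rightarrow> ('q, 'v) mp_gstate \<Rightarrow> bool" where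
  "sm_abs P G g \<longleftrightarrow> (\<forall>k<nclients P. g k = cl G k) \<and>
     (\<forall>j. nclients P \<le> j \<longrightarrow> (\<exists>r. agreed P G j r = Some (g j) \<and> agreed P G j (Suc r) = None))"

lemma sm_abs_init: "sm_abs P (sm_init P) (mp_init P)"
  unfolding sm_abs_def by (auto simp: sm_init_def mp_init_def sa_init_def agreed_def)

lemma sm_abs_stutter:
  "sm_abs P G g \<Longrightarrow> cl G' = cl G \<Longrightarrow> agreed P G' = agreed P G \<Longrightarrow> sm_abs P G' g"
  unfolding sm_abs_def by simp

lemma sent_msgs_in_abs_pools:
  assumes "agreement_inv P G" and "sm_abs P G g"
  shows "sent_msgs P G \<subseteq> (\<Union>k<nclients P + nservers P. snd (g k))"
proof -
  have server: "snd v \<subseteq> snd (g j)" if "nclients P \<le> j" and "agreed P G j r = Some v" for j r v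
  proof -
    obtain R where R: "agreed P G j R = Some (g j)" "agreed P G j (Suc R) = None"
      using assms(2) \<open>nclients P \<le> j\<close> unfolding sm_abs_def by blast
    have "r \<le> R"
    proof (rule ccontr)
      assume "\<not> r \<le> R"
      then show False
        using agreed_downward[OF assms(1) _ \<open>agreed P G j r = Some v\<close>, of "Suc R"] R(2) by auto
    qed
    then show ?thesis
      using agreed_downward[OF assms(1) _ R(1), of r] \<open>agreed P G j r = Some v\<close> by auto
  qed
  have client: "g k = cl G k" if "k < nclients P" for k
    using assms(2) that unfolding sm_abs_def by blast
  show ?thesis
  proof
    fix msg assume "msg \<in> sent_msgs P G"
    then consider (of_client) k where "k < nclients P" "msg \<in> snd (cl G k)"
      | (of_server) j r v where "nclients P \<le> j" "j < nclients P + nservers P"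
          "agreed P G j r = Some v" "msg \<in> snd v"
      unfolding sent_msgs_def ran_def by auto
    then show "msg \<in> (\<Union>k<nclients P + nservers P. snd (g k))"
    proof cases
      case (of_client k)
      then show ?thesis using client[of k] by (metis UN_iff lessThan_iff trans_less_add1)
    next
      case (of_server j r v)
      then show ?thesis using server[of j r v] by blast
    qed
  qed
qed

lemma sm_abs_decide:
  assumes inv: "agreement_inv P G" and abs: "sm_abs P G g"
    and proposed: "v \<in> proposed (sa G j r)" and undecided: "decided (sa G j r) = None"
    and "cl G' = cl G"
    and decided': "\<And>k r'. decided (sa G' k r') =
      (if k = j \<and> r' = r then Some v else decided (sa G k r'))"
  shows "mp_step P g None (g(j := v)) \<and> sm_abs P G' (g(j := v))"
proof
  obtain r0 where r: "r = Suc r0"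
    using inv proposed unfolding agreement_inv_def by (metis empty_iff not0_implies_Suc)
  then have "valid_proposal P G j r0 v"
    using inv proposed unfolding agreement_inv_def by blast
  then obtain c Pl Ms q Ms' where server: "nclients P \<le> j" "j < nclients P + nservers P"
    and prev: "agreed P G j r0 = Some (c, Pl)" and delta: "delta P j c (Inl Ms) = Some (q, Ms')"
    and v: "v = (q, Pl \<union> Ms')" and Ms: "\<forall>msg\<in>Ms. dst msg = j" "Ms \<subseteq> sent_msgs P G"
    unfolding valid_proposal_def sent_to_def by blast
  have none: "agreed P G j (Suc r0) = None"
    using undecided r by (simp add: agreed_def)
  obtain R where R: "agreed P G j R = Some (g j)" "agreed P G j (Suc R) = None"
    using abs server(1) unfolding sm_abs_def by blast
  have "R = r0"
    by (rule agreed_last_unique[OF inv _ R(2) _ none]) (simp_all add: R(1) prev)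
  with R prev have "g j = (c, Pl)" by simp
  moreover have "Ms \<subseteq> (\<Union>k<nclients P + nservers P. snd (g k))"
    using Ms(2) sent_msgs_in_abs_pools[OF inv abs] by blast
  ultimately show "mp_step P g None (g(j := v))"
    using mp_internal[of j P g c Pl Ms q Ms'] server delta v Ms(1) by simp
  have "agreed P G j (Suc r) = None"
    using agreed_Suc[OF inv, of j r] none r by (cases "agreed P G j (Suc r)") auto
  moreover have agreed': "agreed P G' = (agreed P G)(j := (agreed P G j)(r := Some v))"
    using decided' r by (auto simp: agreed_def fun_eq_iff)
  ultimately have "\<exists>r'. agreed P G' j r' = Some v \<and> agreed P G' j (Suc r') = None"
    by auto
  then show "sm_abs P G' (g(j := v))"
    using abs server(1) \<open>cl G' = cl G\<close> agreed' unfolding sm_abs_def by auto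
qed

lemma sm_abs_client_update:
  assumes "sm_abs P G g" and "i < nclients P"
    and "\<And>k. k \<noteq> i \<Longrightarrow> cl G' k = cl G k" and "agreed P G' = agreed P G"
  shows "sm_abs P G' (g(i := cl G' i))"
  using assms unfolding sm_abs_def by auto

lemma sm_pstep_simulation:
  assumes inv: "sm_inv P G" and abs: "sm_abs P G g" and i: "i < nclients P"
    and step: "sm_pstep P i G l G'"
  shows "\<exists>g'. sm_abs P G' g' \<and>
    (g' = g \<and> l = None \<or> (\<exists>a'. mp_step P g a' g' \<and> (l \<noteq> None \<longrightarrow> a' = l)))"
    (is "\<exists>g'. ?simulated g'")
proof -
  have aI: "agreement_inv P G" and li: "local_inv P G i"
    using inv i unfolding sm_inv_def by auto
  have gi: "g i = cl G i"
    using abs i unfolding sm_abs_def by blast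
  have client_step: "?simulated (g(i := cl G' i))"
    if "mp_step P g l (g(i := cl G' i))"
      and "\<And>k. k \<noteq> i \<Longrightarrow> cl G' k = cl G k" and "agreed P G' = agreed P G"
    using sm_abs_client_update[OF abs i that(2,3)] that(1) by blast
  have stutter: "?simulated g" if "l = None" and "cl G' = cl G" and "agreed P G' = agreed P G"
    using sm_abs_stutter[OF abs that(2,3)] that(1) by blast
  from step show ?thesis
  proof cases
    case (sm_call c Pl M x q Ms)
    have "\<not> pending P i c"
      using li sm_call by (simp add: local_inv_def)
    then have "mp_step P g l (g(i := cl G' i))"
      using mp_call[of i P g c Pl M x q Ms] i gi sm_call by simp
    with client_step sm_call show ?thesis by auto
  next
    case (sm_ret c Pl y q Ms)
    then have "mp_step P g l (g(i := cl G' i))"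
      using mp_ret[of i P g c Pl y q Ms] i gi by simp
    with client_step sm_ret show ?thesis by auto
  next
    case (sm_comp_client t Ms c Pl q Ms')
    have "target_ok P (loc G i) i t" and "sent_to P G t Ms"
      using li sm_comp_client by (simp_all add: local_inv_def)
    with sm_comp_client have "t = i" and "\<forall>msg\<in>Ms. dst msg = i"
      and "Ms \<subseteq> (\<Union>k<nclients P + nservers P. snd (g k))"
      using sent_msgs_in_abs_pools[OF aI abs] by (auto simp: target_ok_def sent_to_def)
    then have "mp_step P g l (g(i := cl G' i))"
      using mp_internal[of i P g c Pl Ms q Ms'] i gi sm_comp_client by simp
    with client_step sm_comp_client \<open>t = i\<close> show ?thesis by auto
  next
    case (sm_res_val j A v)
    show ?thesis
    proof (cases "decided A")
      case (Some w)
      with sm_res_val have "agreed P G' = agreed P G"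
        by (auto simp: agreed_def fun_eq_iff)
      with stutter sm_res_val show ?thesis by auto
    next
      case None
      with sm_res_val have "mp_step P g None (g(j := v)) \<and> sm_abs P G' (g(j := v))"
        by (intro sm_abs_decide[OF aI abs]) auto
      with sm_res_val show ?thesis by blast
    qed
  qed (rule exI, rule stutter; simp)+
qed

lemma sm_step_simulation:
  assumes "sm_inv P G" and "sm_abs P G g" and "sm_step P G l G'"
  shows "\<exists>g'. sm_abs P G' g' \<and>
    (g' = g \<and> l = None \<or> (\<exists>a'. mp_step P g a' g' \<and> (l \<noteq> None \<longrightarrow> a' = l)))"
proof -
  obtain i where "i < nclients P" and "sm_pstep P i G l G'"
    using assms(3) unfolding sm_step_def by blast
  with assms(1,2) show ?thesis by (rule sm_pstep_simulation)
qed

theorem theorem1: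
  fixes P :: "('q, 'v, 'mth, 'arg, 'ret) mp_impl"
  assumes "pending_wf P"
  shows "refines (sm_step P) (sm_init P) (mp_step P) (mp_init P)"
proof (rule refines_by_invariant[where I = "sm_inv P" and F = "sm_abs P"])
  show "sm_inv P (sm_init P)" using assms by (rule sm_inv_init)
  show "sm_abs P (sm_init P) (mp_init P)" by (rule sm_abs_init)
qed (fact sm_inv_step[OF assms], fact sm_step_simulation)

end
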